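(* Let $d\ge 7$ and let $G$ be a $d$-regular graph with girth $g(G)\ge 5$. Then for every vertex $x\in V(G)$ there exists a proper $(d+1)$-coloring $c:V(G)\to[d+1]$ of $G$ in which $x$ and at least four of the neighbors of $x$ are b-vertices, i.e. for each of these five vertices $v$ every color of $[d+1]$ appears on $N[v]$.
   Context: $[k]=\{1,\dots,k\}$. $N[v]$ denotes the closed neighborhood of $v$. The girth $g(G)$ is the length of a shortest cycle in $G$. In a (proper) coloring $c$ with color set $[k]$, a vertex $v$ is a b-vertex if $\{c(u):u\in N[v]\}=[k]$. *)

theory Defs
  imports Main "HOL-Library.Extended_Nat"
begin

definition simple_graph :: "'a set \<Rightarrow> ('a \<Rightarrow> 'a \<Rightarrow> bool) \<Rightarrow> bool" where
  "simple_graph V E \<longleftrightarrow> finite V \<and>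
     (\<forall>u v. E u v \<longrightarrow> u \<in> V \<and> v \<in> V) \<and>
     (\<forall>u v. E u v \<longrightarrow> E v u) \<and> (\<forall>v. \<not> E v v)"

definition neighbors :: "'a set \<Rightarrow> ('a \<Rightarrow> 'a \<Rightarrow> bool) \<Rightarrow> 'a \<Rightarrow> 'a set" where
  "neighbors V E v = {u \<in> V. E v u}"

definition closed_nbhd :: "'a set \<Rightarrow> ('a \<Rightarrow> 'a \<Rightarrow> bool) \<Rightarrow> 'a \<Rightarrow> 'a set" where
  "closed_nbhd V E v = insert v (neighbors V E v)"

definition regular :: "'a set \<Rightarrow> ('a \<Rightarrow> 'a \<Rightarrow> bool) \<Rightarrow> nat \<Rightarrow> bool" where
  "regular V E d \<longleftrightarrow> (\<forall>v\<in>V. card (neighbors V E v) = d)"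

definition is_cycle :: "'a set \<Rightarrow> ('a \<Rightarrow> 'a \<Rightarrow> bool) \<Rightarrow> 'a list \<Rightarrow> bool" where
  "is_cycle V E cs \<longleftrightarrow> length cs \<ge> 3 \<and> distinct cs \<and> set cs \<subseteq> V \<and>
     (\<forall>i < length cs. E (cs ! i) (cs ! ((i + 1) mod length cs)))"

definition girth :: "'a set \<Rightarrow> ('a \<Rightarrow> 'a \<Rightarrow> bool) \<Rightarrow> enat" where
  "girth V E = (INF cs \<in> {cs. is_cycle V E cs}. enat (length cs))"

definition proper_coloring :: "'a set \<Rightarrow> ('a \<Rightarrow> 'a \<Rightarrow> bool) \<Rightarrow> nat \<Rightarrow> ('a \<Rightarrow> nat) \<Rightarrow> bool" where
  "proper_coloring V E k c \<longleftrightarrow> (\<forall>v\<in>V. c v \<in> {1..k}) \<and>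
     (\<forall>u\<in>V. \<forall>v\<in>V. E u v \<longrightarrow> c u \<noteq> c v)"

definition b_vertex :: "'a set \<Rightarrow> ('a \<Rightarrow> 'a \<Rightarrow> bool) \<Rightarrow> nat \<Rightarrow> ('a \<Rightarrow> nat) \<Rightarrow> 'a \<Rightarrow> bool" where
  "b_vertex V E k c v \<longleftrightarrow> c ` closed_nbhd V E v = {1..k}"

end

theory Submission
  imports Defs
begin

text \<open>
  Color x with d + 1 and its neighbors bijectively with 1, ..., d, and pick four neighbors y.
  Girth at least 5 makes the blocks N(y) - {x} pairwise disjoint and disjoint from N[x], forces
  every edge between N(x) and N(y) - {x} to start at y, and gives each vertex of one block at most
  one neighbor in any other block.  Color the blocks one after another, each bijectively with the
  d - 1 colors of {1..d} other than that of its y: a vertex of the new block sees at most three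
  earlier colors, and each color occurs at most three times in earlier blocks, so as long as
  6 \<le> d - 1 the conflicts of a bijection can be removed one at a time by swapping two values.
  Then x and the four y are b-vertices, and since all degrees are d the partial coloring extends
  greedily to a proper (d + 1)-coloring.
\<close>

lemma neighbors_iff:
  assumes "simple_graph V E"
  shows "u \<in> neighbors V E v \<longleftrightarrow> E v u"
  using assms by (auto simp: neighbors_def simple_graph_def)

lemma girth_le_cycle_length:
  assumes "is_cycle V E cs"
  shows "girth V E \<le> enat (length cs)"
  unfolding girth_def using assms by (intro INF_lower) simp

lemma girth_ge_5_no_triangle:
  assumes g: "simple_graph V E" and girth: "girth V E \<ge> 5"
    and e: "E a b" "E b c" "E c a"
  shows False
proof -
  have "a \<noteq> b" "b \<noteq> c" "c \<noteq> a" "a \<in> V" "b \<in> V" "c \<in> V"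
    using g e unfolding simple_graph_def by blast+
  with e have "is_cycle V E [a, b, c]"
    by (simp add: is_cycle_def All_less_Suc)
  from order_trans[OF girth girth_le_cycle_length[OF this]] show False
    by (simp add: numeral_eq_enat)
qed

text \<open>Otherwise a, b, c, b' is a 4-cycle.\<close>
lemma girth_ge_5_common_neighbor_unique:
  assumes g: "simple_graph V E" and girth: "girth V E \<ge> 5"
    and "a \<noteq> c" and e: "E a b" "E b c" "E a b'" "E b' c"
  shows "b = b'"
proof (rule ccontr)
  assume "b \<noteq> b'"
  moreover have "a \<noteq> b" "b \<noteq> c" "c \<noteq> b'" "b' \<noteq> a" "a \<in> V" "b \<in> V" "c \<in> V" "b' \<in> V"
    and "E c b'" "E b' a"
    using g e unfolding simple_graph_def by blast+
  ultimately have "is_cycle V E [a, b, c, b']"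
    using e \<open>a \<noteq> c\<close> by (simp add: is_cycle_def All_less_Suc)
  from order_trans[OF girth girth_le_cycle_length[OF this]] show False
    by (simp add: numeral_eq_enat)
qed

lemma girth_ge_5_second_neighbor_not_neighbor:
  assumes g: "simple_graph V E" and girth: "girth V E \<ge> 5"
    and "y \<in> neighbors V E x" "z \<in> neighbors V E y - {x}"
  shows "z \<notin> neighbors V E x"
  using girth_ge_5_no_triangle[OF g girth, of x y z] assms(3,4) neighbors_iff[OF g] g
  by (auto simp: simple_graph_def)

text \<open>Both u and y are common neighbors of x and z.\<close>
lemma girth_ge_5_edge_to_second_neighbor:
  assumes g: "simple_graph V E" and girth: "girth V E \<ge> 5"
    and "y \<in> neighbors V E x" "u \<in> neighbors V E x" "z \<in> neighbors V E y - {x}" "E u z"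
  shows "u = y"
  using girth_ge_5_common_neighbor_unique[OF g girth, where a = x and c = z and b = u and b' = y]
    assms(3-6) neighbors_iff[OF g]
  by auto

lemma girth_ge_5_second_neighbors_sparse:
  assumes g: "simple_graph V E" and girth: "girth V E \<ge> 5"
    and y: "y \<in> neighbors V E x" and y': "y' \<in> neighbors V E x"
    and z: "z \<in> neighbors V E y - {x}"
  shows "card {w\<in>neighbors V E y' - {x}. E z w} \<le> 1"
proof -
  have "z \<noteq> y'"
    using girth_ge_5_second_neighbor_not_neighbor[OF g girth y z] y' by auto
  then have "w = w'" if "w \<in> neighbors V E y'" "E z w" "w' \<in> neighbors V E y'" "E z w'" for w w'
    using girth_ge_5_common_neighbor_unique[OF g girth, where a = z and c = y' and b = w and b' = w']
      that neighbors_iff[OF g] g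
    by (auto simp: simple_graph_def)
  moreover have "finite (neighbors V E y')"
    using g by (simp add: simple_graph_def neighbors_def)
  ultimately show ?thesis
    by (subst One_nat_def, subst card_le_Suc0_iff_eq) auto
qed

lemma proper_coloring_insert:
  assumes "finite B" and col: "proper_coloring B E k p"
    and sym: "\<And>u w. E u w \<Longrightarrow> E w u" and irr: "\<not> E v v"
    and deg: "card {u\<in>B. E v u} < k"
  shows "\<exists>a. proper_coloring (insert v B) E k (p(v := a))"
proof -
  have fin: "finite {u\<in>B. E v u}" using \<open>finite B\<close> by simp
  have "card (p ` {u\<in>B. E v u}) < card {1..k}"
    using card_image_le[OF fin, of p] deg by simp
  then have "\<not> {1..k} \<subseteq> p ` {u\<in>B. E v u}"
    using card_mono[OF finite_imageI[OF fin, of p], of "{1..k}"] by (meson not_le)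
  then obtain a where a: "a \<in> {1..k}" "\<And>u. u \<in> B \<Longrightarrow> E v u \<Longrightarrow> p u \<noteq> a"
    by blast
  have "proper_coloring (insert v B) E k (p(v := a))"
    unfolding proper_coloring_def
  proof (intro conjI ballI impI)
    fix u w assume "u \<in> insert v B" "w \<in> insert v B" "E u w"
    with col a irr sym show "(p(v := a)) u \<noteq> (p(v := a)) w"
      unfolding proper_coloring_def by (metis fun_upd_apply insertE)
  qed (use col a in \<open>auto simp: proper_coloring_def\<close>)
  then show ?thesis ..
qed

lemma proper_coloring_extend:
  assumes "finite A" "finite B" and col: "proper_coloring B E k p"
    and sym: "\<And>u w. E u w \<Longrightarrow> E w u" and irr: "\<And>v. \<not> E v v"
    and deg: "\<And>v. v \<in> A \<Longrightarrow> card {u\<in>A \<union> B. E v u} < k"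
  shows "\<exists>c. proper_coloring (A \<union> B) E k c \<and> (\<forall>v\<in>B. c v = p v)"
  using assms(1) deg
proof (induction A rule: finite_induct)
  case empty
  show ?case using col by auto
next
  case (insert v A)
  have deg_mono: "card {u\<in>A \<union> B. E w u} \<le> card {u\<in>insert v A \<union> B. E w u}" for w
    using insert.hyps(1) \<open>finite B\<close> by (intro card_mono) auto
  obtain c where c: "proper_coloring (A \<union> B) E k c" "\<forall>w\<in>B. c w = p w"
    using insert.IH insert.prems deg_mono le_less_trans by blast
  show ?case
  proof (cases "v \<in> B")
    case True
    with c show ?thesis by (intro exI[of _ c]) (simp add: insert_absorb)
  next
    case False
    have "card {u\<in>A \<union> B. E v u} < k"
      using insert.prems[of v] deg_mono[of v] by simp
    with proper_coloring_insert[OF _ c(1) sym irr] insert.hyps(1) \<open>finite B\<close>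
    obtain a where "proper_coloring (insert v (A \<union> B)) E k (c(v := a))" by blast
    moreover have "\<forall>w\<in>B. (c(v := a)) w = p w" using c(2) False by simp
    ultimately show ?thesis unfolding Un_insert_left by blast
  qed
qed

lemma regular_proper_coloring_extend:
  assumes g: "simple_graph V E" and reg: "regular V E d"
    and "B \<subseteq> V" and p: "proper_coloring B E (d + 1) p"
  shows "\<exists>c. proper_coloring V E (d + 1) c \<and> (\<forall>v\<in>B. c v = p v)"
proof -
  have V_split: "(V - B) \<union> B = V" using \<open>B \<subseteq> V\<close> by blast
  have fin: "finite (V - B)" "finite B"
    using g \<open>B \<subseteq> V\<close> by (auto simp: simple_graph_def intro: finite_subset)
  have sym: "\<And>u w. E u w \<Longrightarrow> E w u" and irr: "\<And>v. \<not> E v v"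
    using g by (auto simp: simple_graph_def)
  have deg: "card {u\<in>(V - B) \<union> B. E v u} < d + 1" if "v \<in> V - B" for v
    using reg that unfolding V_split by (simp add: regular_def neighbors_def)
  show ?thesis
    using proper_coloring_extend[OF fin p sym irr deg] unfolding V_split .
qed

lemma b_vertex_iff_agrees:
  assumes "closed_nbhd V E v \<subseteq> B" and "\<forall>u\<in>B. c u = p u"
  shows "b_vertex V E k c v \<longleftrightarrow> p ` closed_nbhd V E v = {1..k}"
proof -
  have "c ` closed_nbhd V E v = p ` closed_nbhd V E v"
    using assms by (intro image_cong) auto
  then show ?thesis by (simp add: b_vertex_def)
qed

lemma bij_swap_reduces_conflicts:
  assumes finA: "finite A" and g: "bij_betw g A C" and a: "a \<in> A" "F a (g a)"
    and row: "\<And>a. a \<in> A \<Longrightarrow> card {c\<in>C. F a c} \<le> k"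
    and col: "\<And>c. c \<in> C \<Longrightarrow> card {a\<in>A. F a c} \<le> k"
    and large: "2 * k \<le> card A"
  shows "\<exists>g'. bij_betw g' A C \<and> {b\<in>A. F b (g' b)} \<subset> {b\<in>A. F b (g b)}"
proof -
  define X where "X = {b\<in>A. F a (g b)}"
  define Y where "Y = {b\<in>A. F b (g a)}"
  have "card X = card (g ` X)"
    using g by (intro card_image[symmetric]) (auto simp: X_def bij_betw_def intro: inj_on_subset)
  also have "\<dots> \<le> card {c\<in>C. F a c}"
    using g finA by (intro card_mono) (auto simp: X_def bij_betw_def)
  finally have "card X \<le> k"
    using row[OF a(1)] by simp
  moreover have "card Y \<le> k"
    using col[of "g a"] g a(1) by (auto simp: Y_def bij_betw_def)
  moreover have "a \<in> X \<inter> Y" "finite X" "finite Y"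
    using a finA by (auto simp: X_def Y_def)
  moreover from this have "card (X \<inter> Y) > 0" by (auto simp: card_gt_0_iff)
  ultimately have "card (X \<union> Y) < card A"
    using card_Un_Int[of X Y] large by linarith
  then have "\<not> A \<subseteq> X \<union> Y"
    using card_mono[of "X \<union> Y" A] \<open>finite X\<close> \<open>finite Y\<close> by auto
  then obtain b where b: "b \<in> A" "b \<notin> X" "b \<notin> Y" by blast
  have "a \<noteq> b" using a b by (auto simp: X_def)
  text \<open>Swapping the values at a and b removes the conflict at a and creates none at b.\<close>
  define g' where "g' = g(a := g b, b := g a)"
  have "g' ` A = g ` A"
    using a(1) b(1) \<open>a \<noteq> b\<close> unfolding g'_def by (auto simp: image_def)
  moreover have "inj_on g' A"
    using g a(1) b(1) \<open>a \<noteq> b\<close> unfolding g'_def bij_betw_def inj_on_def by auto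
  ultimately have "bij_betw g' A C"
    using g by (simp add: bij_betw_def)
  moreover have "{c\<in>A. F c (g' c)} \<subseteq> {c\<in>A. F c (g c)} - {a}"
    using b \<open>a \<noteq> b\<close> unfolding g'_def X_def Y_def by auto
  with a have "{c\<in>A. F c (g' c)} \<subset> {c\<in>A. F c (g c)}" by blast
  ultimately show ?thesis by blast
qed

lemma exists_bij_avoiding:
  assumes finA: "finite A" and finC: "finite C" and card_eq: "card A = card C"
    and row: "\<And>a. a \<in> A \<Longrightarrow> card {c\<in>C. F a c} \<le> k"
    and col: "\<And>c. c \<in> C \<Longrightarrow> card {a\<in>A. F a c} \<le> k"
    and large: "2 * k \<le> card A"
  shows "\<exists>f. bij_betw f A C \<and> (\<forall>a\<in>A. \<not> F a (f a))"
proof -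
  have "\<exists>f. bij_betw f A C \<and> (\<forall>a\<in>A. \<not> F a (f a))"
    if "bij_betw g A C" "card {a\<in>A. F a (g a)} = m" for g m
    using that
  proof (induction m arbitrary: g rule: less_induct)
    case (less m g)
    show ?case
    proof (cases "\<exists>a\<in>A. F a (g a)")
      case True
      then obtain g' where "bij_betw g' A C" "{b\<in>A. F b (g' b)} \<subset> {b\<in>A. F b (g b)}"
        using bij_swap_reduces_conflicts[OF finA less.prems(1) _ _ row col large] by blast
      moreover from this(2) have "card {b\<in>A. F b (g' b)} < m"
        using psubset_card_mono[of "{b\<in>A. F b (g b)}"] less.prems(2) finA by auto
      ultimately show ?thesis using less.IH by blast
    next
      case False
      with less.prems(1) show ?thesis by blast
    qed
  qed
  moreover obtain g where "bij_betw g A C"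
    using finite_same_card_bij[OF finA finC card_eq] by blast
  ultimately show ?thesis by blast
qed

lemma card_UN_le_card:
  assumes "finite I" and "\<And>i. i \<in> I \<Longrightarrow> card (A i) \<le> 1"
  shows "card (\<Union>i\<in>I. A i) \<le> card I"
proof -
  have "card (\<Union>i\<in>I. A i) \<le> (\<Sum>i\<in>I. card (A i))"
    using assms(1) by (rule card_UN_le)
  also have "\<dots> \<le> (\<Sum>i\<in>I. 1)"
    using assms(2) by (rule sum_mono)
  finally show ?thesis by simp
qed

lemma exists_bij_avoiding_neighbor_colors:
  assumes finZ: "finite Z" and finC: "finite C" and card_eq: "card Z = card C" and finW: "finite W"
    and sym: "\<And>u w. E u w \<Longrightarrow> E w u"
    and nbrs: "\<And>z. z \<in> Z \<Longrightarrow> card {w\<in>W. E z w} \<le> k"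
    and classes: "\<And>c. card {w\<in>W. g w = c} \<le> k"
    and sparse: "\<And>w. w \<in> W \<Longrightarrow> card {z\<in>Z. E w z} \<le> 1"
    and large: "2 * k \<le> card Z"
  shows "\<exists>f. bij_betw f Z C \<and> (\<forall>z\<in>Z. \<forall>w\<in>W. E z w \<longrightarrow> f z \<noteq> g w)"
proof -
  define F where "F z c \<longleftrightarrow> (\<exists>w\<in>W. E z w \<and> g w = c)" for z c
  have "card {c\<in>C. F z c} \<le> k" if "z \<in> Z" for z
  proof -
    have "card {c\<in>C. F z c} \<le> card (g ` {w\<in>W. E z w})"
      using finW by (intro card_mono) (auto simp: F_def)
    also have "\<dots> \<le> card {w\<in>W. E z w}"
      using finW by (intro card_image_le) auto
    finally show ?thesis using nbrs[OF that] by simp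
  qed
  moreover have "card {z\<in>Z. F z c} \<le> k" for c
  proof -
    have "card {z\<in>Z. F z c} \<le> card (\<Union>w\<in>{w\<in>W. g w = c}. {z\<in>Z. E w z})"
      using finW finZ sym by (intro card_mono) (auto simp: F_def)
    also have "\<dots> \<le> card {w\<in>W. g w = c}"
      using finW sparse by (intro card_UN_le_card) auto
    finally show ?thesis using classes[of c] by simp
  qed
  ultimately obtain f where "bij_betw f Z C" "\<And>z. z \<in> Z \<Longrightarrow> \<not> F z (f z)"
    using exists_bij_avoiding[where A = Z and C = C and F = F and k = k] finZ finC card_eq large
    by blast
  then show ?thesis by (metis F_def)
qed

lemma override_on_proper:
  assumes sym: "\<And>u w. E u w \<Longrightarrow> E w u" and irr: "\<And>v. \<not> E v v"
    and g: "\<forall>z\<in>U. \<forall>w\<in>U. E z w \<longrightarrow> g z \<noteq> g w" and f_inj: "inj_on f Z"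
    and f_avoids: "\<forall>z\<in>Z. \<forall>w\<in>U. E z w \<longrightarrow> f z \<noteq> g w"
  shows "\<forall>z\<in>Z \<union> U. \<forall>w\<in>Z \<union> U. E z w \<longrightarrow> override_on g f Z z \<noteq> override_on g f Z w"
proof (intro ballI impI)
  fix z w assume z: "z \<in> Z \<union> U" and w: "w \<in> Z \<union> U" and e: "E z w"
  show "override_on g f Z z \<noteq> override_on g f Z w"
  proof (cases "z \<in> Z"; cases "w \<in> Z")
    assume "z \<in> Z" "w \<in> Z"
    with e irr f_inj show ?thesis by (auto simp: inj_on_def)
  next
    assume "z \<in> Z" "w \<notin> Z"
    with w e f_avoids show ?thesis by simp
  next
    assume "z \<notin> Z" "w \<in> Z"
    with z sym[OF e] f_avoids have "f w \<noteq> g z" by blast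
    with \<open>z \<notin> Z\<close> \<open>w \<in> Z\<close> show ?thesis by simp
  next
    assume "z \<notin> Z" "w \<notin> Z"
    with z w e g show ?thesis by simp
  qed
qed

lemma exists_bij_avoiding_block_colors:
  fixes Z :: "'i \<Rightarrow> 'a set"
  assumes "finite I" and sym: "\<And>u w. E u w \<Longrightarrow> E w u"
    and finY: "finite Y" and finC: "finite C" and card_eq: "card Y = card C"
    and finZ: "\<And>i. i \<in> I \<Longrightarrow> finite (Z i)" and large: "2 * card I \<le> card Y"
    and sparse_Y: "\<And>i z. i \<in> I \<Longrightarrow> z \<in> Y \<Longrightarrow> card {w\<in>Z i. E z w} \<le> 1"
    and sparse_Z: "\<And>i w. i \<in> I \<Longrightarrow> w \<in> Z i \<Longrightarrow> card {z\<in>Y. E w z} \<le> 1"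
    and g_inj: "\<And>i. i \<in> I \<Longrightarrow> inj_on g (Z i)"
  shows "\<exists>f. bij_betw f Y C \<and> (\<forall>z\<in>Y. \<forall>w\<in>(\<Union>i\<in>I. Z i). E z w \<longrightarrow> f z \<noteq> g w)"
proof (rule exists_bij_avoiding_neighbor_colors[OF finY finC card_eq _ sym _ _ _ large])
  show "finite (\<Union>i\<in>I. Z i)"
    using \<open>finite I\<close> finZ by simp
  show "card {w\<in>(\<Union>i\<in>I. Z i). E z w} \<le> card I" if "z \<in> Y" for z
  proof -
    have "{w\<in>(\<Union>i\<in>I. Z i). E z w} = (\<Union>i\<in>I. {w\<in>Z i. E z w})" by auto
    also have "card \<dots> \<le> card I"
      using \<open>finite I\<close> sparse_Y that by (intro card_UN_le_card) auto
    finally show ?thesis .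
  qed
  show "card {w\<in>(\<Union>i\<in>I. Z i). g w = c} \<le> card I" for c
  proof -
    have "{w\<in>(\<Union>i\<in>I. Z i). g w = c} = (\<Union>i\<in>I. {w\<in>Z i. g w = c})" by auto
    also have "card \<dots> \<le> card I"
    proof (rule card_UN_le_card[OF \<open>finite I\<close>])
      fix i assume "i \<in> I"
      with g_inj finZ show "card {w\<in>Z i. g w = c} \<le> 1"
        by (subst One_nat_def, subst card_le_Suc0_iff_eq) (auto simp: inj_on_def)
    qed
    finally show ?thesis .
  qed
  show "card {z\<in>Y. E w z} \<le> 1" if "w \<in> (\<Union>i\<in>I. Z i)" for w
    using that sparse_Z by blast
qed

lemma exists_block_bijections:
  fixes Z :: "'i \<Rightarrow> 'a set" and C :: "'i \<Rightarrow> 'b set"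
  assumes "finite I"
    and sym: "\<And>u w. E u w \<Longrightarrow> E w u" and irr: "\<And>v. \<not> E v v"
    and fin: "\<And>i. i \<in> I \<Longrightarrow> finite (Z i) \<and> finite (C i) \<and> card (Z i) = card (C i)"
    and large: "\<And>i. i \<in> I \<Longrightarrow> 2 * (card I - 1) \<le> card (Z i)"
    and disj: "\<And>i j. i \<in> I \<Longrightarrow> j \<in> I \<Longrightarrow> i \<noteq> j \<Longrightarrow> Z i \<inter> Z j = {}"
    and sparse: "\<And>i j z. i \<in> I \<Longrightarrow> j \<in> I \<Longrightarrow> i \<noteq> j \<Longrightarrow> z \<in> Z i \<Longrightarrow> card {w\<in>Z j. E z w} \<le> 1"
  shows "\<exists>g. (\<forall>i\<in>I. bij_betw g (Z i) (C i)) \<and>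
    (\<forall>z\<in>(\<Union>i\<in>I. Z i). \<forall>w\<in>(\<Union>i\<in>I. Z i). E z w \<longrightarrow> g z \<noteq> g w)"
  using assms(1) fin large disj sparse
proof (induction I rule: finite_induct)
  case empty
  show ?case by simp
next
  case (insert j I)
  define U where "U = (\<Union>i\<in>I. Z i)"
  have "\<exists>g. (\<forall>i\<in>I. bij_betw g (Z i) (C i)) \<and> (\<forall>z\<in>U. \<forall>w\<in>U. E z w \<longrightarrow> g z \<noteq> g w)"
    unfolding U_def
  proof (rule insert.IH)
    fix i assume "i \<in> I"
    then show "2 * (card I - 1) \<le> card (Z i)"
      using insert.prems(2)[of i] insert.hyps by simp
  qed (use insert.prems(1,3,4) in \<open>meson insertI2\<close>)+
  then obtain g where g_bij: "\<And>i. i \<in> I \<Longrightarrow> bij_betw g (Z i) (C i)"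
    and g_proper: "\<forall>z\<in>U. \<forall>w\<in>U. E z w \<longrightarrow> g z \<noteq> g w"
    by blast
  have "\<exists>f. bij_betw f (Z j) (C j) \<and> (\<forall>z\<in>Z j. \<forall>w\<in>U. E z w \<longrightarrow> f z \<noteq> g w)"
    unfolding U_def
  proof (rule exists_bij_avoiding_block_colors[OF insert.hyps(1) sym])
    show "2 * card I \<le> card (Z j)"
      using insert.prems(2)[of j] insert.hyps by simp
    show "\<And>i. i \<in> I \<Longrightarrow> inj_on g (Z i)"
      using g_bij by (simp add: bij_betw_def)
    show "card {w\<in>Z i. E z w} \<le> 1" if "i \<in> I" "z \<in> Z j" for i z
      using insert.prems(4)[of j i z] that insert.hyps(2) by auto
    show "card {z\<in>Z j. E w z} \<le> 1" if "i \<in> I" "w \<in> Z i" for i w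
      using insert.prems(4)[of i j w] that insert.hyps(2) by auto
  qed (use insert.prems(1) in \<open>meson insertI1 insertI2\<close>)+
  then obtain f where f_bij: "bij_betw f (Z j) (C j)"
    and f_avoids: "\<forall>z\<in>Z j. \<forall>w\<in>U. E z w \<longrightarrow> f z \<noteq> g w"
    by blast
  have "bij_betw (override_on g f (Z j)) (Z i) (C i)" if "i \<in> insert j I" for i
  proof (cases "i = j")
    case True
    from f_bij have "bij_betw (override_on g f (Z j)) (Z j) (C j)"
      by (rule bij_betw_cong[THEN iffD1, rotated]) simp
    with True show ?thesis by simp
  next
    case False
    with that have "i \<in> I" by simp
    have "Z i \<inter> Z j = {}"
      using insert.prems(3)[of i j] \<open>i \<in> I\<close> insert.hyps(2) by blast
    from g_bij[OF \<open>i \<in> I\<close>] show ?thesis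
      by (rule bij_betw_cong[THEN iffD1, rotated]) (use \<open>Z i \<inter> Z j = {}\<close> in \<open>auto simp: disjoint_iff\<close>)
  qed
  moreover have "(\<Union>i\<in>insert j I. Z i) = Z j \<union> U"
    by (simp add: U_def)
  moreover have "inj_on f (Z j)"
    using f_bij by (simp add: bij_betw_def)
  ultimately show ?case
    using override_on_proper[OF sym irr g_proper _ f_avoids] by metis
qed

lemma exists_second_neighbor_bijections:
  assumes g: "simple_graph V E" and girth: "girth V E \<ge> 5" and reg: "regular V E d"
    and S: "S \<subseteq> neighbors V E x" and large: "2 * card S \<le> d + 1"
    and h: "\<And>y. y \<in> S \<Longrightarrow> h y \<in> {1..d}"
  shows "\<exists>f. (\<forall>y\<in>S. bij_betw f (neighbors V E y - {x}) ({1..d} - {h y})) \<and>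
    (\<forall>z\<in>(\<Union>y\<in>S. neighbors V E y - {x}). \<forall>w\<in>(\<Union>y\<in>S. neighbors V E y - {x}).
      E z w \<longrightarrow> f z \<noteq> f w)"
proof (rule exists_block_bijections)
  have finN: "finite (neighbors V E v)" for v
    using g by (simp add: simple_graph_def neighbors_def)
  then show "finite S"
    using S finite_subset by blast
  show "E u w \<Longrightarrow> E w u" "\<not> E v v" for u w v
    using g by (auto simp: simple_graph_def)
  fix y assume "y \<in> S"
  then have "y \<in> V" "x \<in> neighbors V E y"
    using S g by (auto simp: neighbors_def simple_graph_def)
  then have "card (neighbors V E y - {x}) = d - 1"
    using reg finN by (simp add: regular_def card_Diff_singleton)
  moreover have "card ({1..d} - {h y}) = d - 1"
    using h[OF \<open>y \<in> S\<close>] by (simp add: card_Diff_singleton)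
  ultimately show "finite (neighbors V E y - {x}) \<and> finite ({1..d} - {h y}) \<and>
      card (neighbors V E y - {x}) = card ({1..d} - {h y})"
    and "2 * (card S - 1) \<le> card (neighbors V E y - {x})"
    using finN large by simp_all
next
  fix y y' assume "y \<in> S" "y' \<in> S" "y \<noteq> y'"
  have "z \<notin> (neighbors V E y - {x}) \<inter> (neighbors V E y' - {x})" for z
  proof
    assume z: "z \<in> (neighbors V E y - {x}) \<inter> (neighbors V E y' - {x})"
    then have "E y' z" by (simp add: neighbors_iff[OF g])
    with z \<open>y \<in> S\<close> \<open>y' \<in> S\<close> S have "y' = y"
      using girth_ge_5_edge_to_second_neighbor[OF g girth, of y x y' z] by blast
    with \<open>y \<noteq> y'\<close> show False by simp
  qed
  then show "(neighbors V E y - {x}) \<inter> (neighbors V E y' - {x}) = {}" by blast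
  fix z assume "z \<in> neighbors V E y - {x}"
  then show "card {w\<in>neighbors V E y' - {x}. E z w} \<le> 1"
    using girth_ge_5_second_neighbors_sparse[OF g girth] S \<open>y \<in> S\<close> \<open>y' \<in> S\<close> by blast
qed

lemma proper_coloring_ball:
  assumes g: "simple_graph V E" and girth: "girth V E \<ge> 5" and S: "S \<subseteq> neighbors V E x"
    and h: "bij_betw h (neighbors V E x) {1..d}"
    and f_bij: "\<And>y. y \<in> S \<Longrightarrow> bij_betw f (neighbors V E y - {x}) ({1..d} - {h y})"
    and f_proper: "\<forall>z\<in>(\<Union>y\<in>S. neighbors V E y - {x}). \<forall>w\<in>(\<Union>y\<in>S. neighbors V E y - {x}).
      E z w \<longrightarrow> f z \<noteq> f w"
  shows "proper_coloring (closed_nbhd V E x \<union> (\<Union>y\<in>S. neighbors V E y)) E (d + 1)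
    (\<lambda>v. if v = x then d + 1 else if v \<in> neighbors V E x then h v else f v)"
    (is "proper_coloring ?B E (d + 1) ?p")
proof -
  define N where "N = neighbors V E"
  have sym: "\<And>u w. E u w \<Longrightarrow> E w u" and irr: "\<And>v. \<not> E v v"
    using g by (auto simp: simple_graph_def)
  have N_iff: "u \<in> N v \<longleftrightarrow> E v u" for u v
    unfolding N_def by (rule neighbors_iff[OF g])
  have layers: "v = x \<or> v \<in> N x \<or> (\<exists>y\<in>S. v \<in> N y - {x})" if "v \<in> ?B" for v
    using that by (auto simp: closed_nbhd_def N_def)
  have p_N: "?p v \<in> {1..d}" "?p v = h v" if "v \<in> N x" for v
    using bij_betw_apply[OF h] that neighbors_iff[OF g, of x x] irr by (auto simp: N_def)
  have p_Z: "?p v \<in> {1..d} - {h y}" "?p v = f v" if "y \<in> S" "v \<in> N y - {x}" for y v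
    using girth_ge_5_second_neighbor_not_neighbor[OF g girth] bij_betw_apply[OF f_bij] S that
    by (auto simp: N_def)
  show ?thesis
    unfolding proper_coloring_def
  proof (intro conjI ballI impI)
    fix v assume "v \<in> ?B"
    with layers consider "v = x" | "v \<in> N x" | y where "y \<in> S" "v \<in> N y - {x}" by blast
    then show "?p v \<in> {1..d + 1}"
    proof cases
      case 1
      then show ?thesis by simp
    next
      case 2
      then show ?thesis using p_N(1)[OF 2] by simp
    next
      case (3 y)
      then show ?thesis using p_Z(1)[OF 3] by simp
    qed
  next
    fix u v assume "u \<in> ?B" "v \<in> ?B" "E u v"
    from layers[OF this(1)] layers[OF this(2)] consider "u = x" | "v = x" | "u \<in> N x" "v \<in> N x"
      | y where "y \<in> S" "u \<in> N x" "v \<in> N y - {x}" | y where "y \<in> S" "v \<in> N x" "u \<in> N y - {x}"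
      | y y' where "y \<in> S" "y' \<in> S" "u \<in> N y - {x}" "v \<in> N y' - {x}"
      by blast
    then show "?p u \<noteq> ?p v"
    proof cases
      case 1
      with \<open>E u v\<close> have "v \<in> N x" by (simp add: N_iff)
      with 1 p_N(1)[of v] show ?thesis by auto
    next
      case 2
      with \<open>E u v\<close> sym have "u \<in> N x" by (simp add: N_iff)
      with 2 p_N(1)[of u] show ?thesis by auto
    next
      case 3
      with \<open>E u v\<close> girth_ge_5_no_triangle[OF g girth, of x u v] sym show ?thesis
        by (auto simp: N_iff)
    next
      case (4 y)
      with \<open>E u v\<close> S have "u = y"
        using girth_ge_5_edge_to_second_neighbor[OF g girth, of y x u v] by (auto simp: N_def)
      with p_N(2)[OF 4(2)] p_Z(1)[OF 4(1,3)] show ?thesis by auto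
    next
      case (5 y)
      with \<open>E u v\<close> sym S have "v = y"
        using girth_ge_5_edge_to_second_neighbor[OF g girth, of y x v u] by (auto simp: N_def)
      with p_N(2)[OF 5(2)] p_Z(1)[OF 5(1,3)] show ?thesis by auto
    next
      case (6 y y')
      with \<open>E u v\<close> f_proper p_Z(2) show ?thesis by (auto simp: N_def)
    qed
  qed
qed

lemma exists_local_coloring:
  assumes g: "simple_graph V E" and girth: "girth V E \<ge> 5" and reg: "regular V E d"
    and x: "x \<in> V" and S: "S \<subseteq> neighbors V E x" and large: "2 * card S \<le> d + 1"
  shows "\<exists>p. proper_coloring (closed_nbhd V E x \<union> (\<Union>y\<in>S. neighbors V E y)) E (d + 1) p \<and>
    p ` closed_nbhd V E x = {1..d + 1} \<and> (\<forall>y\<in>S. p ` closed_nbhd V E y = {1..d + 1})"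
proof -
  have "finite (neighbors V E x)" "card (neighbors V E x) = d"
    using g reg x by (simp_all add: simple_graph_def neighbors_def regular_def)
  then obtain h where h: "bij_betw h (neighbors V E x) {1..d}"
    using finite_same_card_bij[of _ "{1..d}"] by auto
  have h_S: "h y \<in> {1..d}" if "y \<in> S" for y
    using bij_betw_apply[OF h] S that by blast
  obtain f where f_bij: "\<And>y. y \<in> S \<Longrightarrow> bij_betw f (neighbors V E y - {x}) ({1..d} - {h y})"
    and f_proper: "\<forall>z\<in>(\<Union>y\<in>S. neighbors V E y - {x}). \<forall>w\<in>(\<Union>y\<in>S. neighbors V E y - {x}).
      E z w \<longrightarrow> f z \<noteq> f w"
    using exists_second_neighbor_bijections[OF g girth reg S large, where h = h] h_S by blast
  define p where "p v = (if v = x then d + 1 else if v \<in> neighbors V E x then h v else f v)" for v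
  have "proper_coloring (closed_nbhd V E x \<union> (\<Union>y\<in>S. neighbors V E y)) E (d + 1) p"
    unfolding p_def using proper_coloring_ball[OF g girth S h f_bij f_proper] .
  moreover have "p ` closed_nbhd V E x = {1..d + 1}"
  proof -
    have "p ` neighbors V E x = h ` neighbors V E x"
      using g by (intro image_cong) (auto simp: p_def neighbors_iff simple_graph_def)
    also have "\<dots> = {1..d}"
      using h by (simp add: bij_betw_def)
    finally have "p ` neighbors V E x = {1..d}" .
    moreover have "p x = d + 1" by (simp add: p_def)
    ultimately show ?thesis by (auto simp: closed_nbhd_def)
  qed
  moreover have "p ` closed_nbhd V E y = {1..d + 1}" if "y \<in> S" for y
  proof -
    have "closed_nbhd V E y = insert y (insert x (neighbors V E y - {x}))"
      using S that g x by (auto simp: closed_nbhd_def neighbors_def simple_graph_def)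
    then have "p ` closed_nbhd V E y = insert (p y) (insert (p x) (p ` (neighbors V E y - {x})))"
      by (simp only: image_insert)
    also have "p ` (neighbors V E y - {x}) = f ` (neighbors V E y - {x})"
      using girth_ge_5_second_neighbor_not_neighbor[OF g girth] S that
      by (intro image_cong) (auto simp: p_def)
    also have "\<dots> = {1..d} - {h y}"
      using f_bij[OF that] by (simp add: bij_betw_def)
    finally have "p ` closed_nbhd V E y = insert (p y) (insert (p x) ({1..d} - {h y}))" .
    moreover have "p y = h y" "p x = d + 1"
      using S that g by (auto simp: p_def neighbors_iff simple_graph_def)
    ultimately show ?thesis
      using h_S[OF that] by auto
  qed
  ultimately show ?thesis by blast
qed

theorem mainTheorem2:
  fixes V :: "'a set" and E :: "'a \<Rightarrow> 'a \<Rightarrow> bool" and d :: nat and x :: 'a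
  assumes "simple_graph V E"
    and "d \<ge> 7"
    and "regular V E d"
    and "girth V E \<ge> 5"
    and "x \<in> V"
  shows "\<exists>c :: 'a \<Rightarrow> nat. proper_coloring V E (d + 1) c \<and> b_vertex V E (d + 1) c x \<and>
           (\<exists>S \<subseteq> neighbors V E x. card S \<ge> 4 \<and> (\<forall>v\<in>S. b_vertex V E (d + 1) c v))"
proof -
  have "4 \<le> card (neighbors V E x)"
    using assms(2,3,5) by (simp add: regular_def)
  then obtain S where S: "S \<subseteq> neighbors V E x" "card S = 4"
    by (rule obtain_subset_with_card_n)
  define B where "B = closed_nbhd V E x \<union> (\<Union>y\<in>S. neighbors V E y)"
  obtain p where p: "proper_coloring B E (d + 1) p" "p ` closed_nbhd V E x = {1..d + 1}"
    "\<And>y. y \<in> S \<Longrightarrow> p ` closed_nbhd V E y = {1..d + 1}"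
    using exists_local_coloring[OF assms(1,4,3,5) S(1)] S(2) assms(2) unfolding B_def by auto
  have "B \<subseteq> V" and nbhds_B: "closed_nbhd V E x \<subseteq> B" "\<And>y. y \<in> S \<Longrightarrow> closed_nbhd V E y \<subseteq> B"
    using S(1) assms(5) by (auto simp: B_def closed_nbhd_def neighbors_def)
  then obtain c where c: "proper_coloring V E (d + 1) c" "\<forall>v\<in>B. c v = p v"
    using regular_proper_coloring_extend[OF assms(1,3) _ p(1)] by blast
  have "b_vertex V E (d + 1) c x" "\<forall>v\<in>S. b_vertex V E (d + 1) c v"
    using b_vertex_iff_agrees[OF _ c(2)] nbhds_B p(2,3) by simp_all
  with c(1) S show ?thesis by (intro exI[of _ c]) auto
qed

end
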